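(* Let $G=(L\cup R,E)$ be a Tanner graph with girth $g>4$, and let $\mathcal{S}\subset L$ be an $(a,b)$ trapping set. If $\mathcal{S}$ contains a variable node $v$ with $d(v)>b$, then $a\ge d(v)+1-b$.
   Context: A Tanner graph is a bipartite graph $G=(L\cup R,E)$ with variable nodes $L$ and check nodes $R$, without parallel edges; $d(v)$ is the degree of $v$ in $G$, and the girth is the length of a shortest cycle. For $\mathcal{S}\subset L$, $\Gamma(\mathcal{S})$ is the set of neighbors of $\mathcal{S}$ in $R$; the induced subgraph $G(\mathcal{S})$ has node set $\mathcal{S}\cup\Gamma(\mathcal{S})$ and the edges of $G$ between them; $\Gamma_{\mathrm{o}}(\mathcal{S})$ is the set of check nodes in $\Gamma(\mathcal{S})$ of odd degree in $G(\mathcal{S})$. $\mathcal{S}$ is an $(a,b)$ trapping set if $|\mathcal{S}|=a$ and $|\Gamma_{\mathrm{o}}(\mathcal{S})|=b$. *)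

theory Defs
  imports Main
begin

definition tanner_graph :: "'a set \<Rightarrow> 'a set \<Rightarrow> ('a \<times> 'a) set \<Rightarrow> bool" where
  "tanner_graph L R E \<longleftrightarrow> finite L \<and> finite R \<and> L \<inter> R = {} \<and> E \<subseteq> L \<times> R"

definition adj :: "('a \<times> 'a) set \<Rightarrow> 'a \<Rightarrow> 'a \<Rightarrow> bool" where
  "adj E x y \<longleftrightarrow> (x, y) \<in> E \<or> (y, x) \<in> E"

definition is_cycle :: "('a \<times> 'a) set \<Rightarrow> 'a list \<Rightarrow> bool" where
  "is_cycle E vs \<longleftrightarrow> length vs \<ge> 3 \<and> distinct vs \<and>
     (\<forall>i < length vs. adj E (vs ! i) (vs ! ((i + 1) mod length vs)))"

text \<open>girth > k: every cycle has length > k (vacuous for acyclic graphs, girth = \<infinity>).\<close>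
definition girth_gt :: "('a \<times> 'a) set \<Rightarrow> nat \<Rightarrow> bool" where
  "girth_gt E k \<longleftrightarrow> (\<forall>vs. is_cycle E vs \<longrightarrow> length vs > k)"

definition deg :: "('a \<times> 'a) set \<Rightarrow> 'a \<Rightarrow> nat" where
  "deg E v = card {u. adj E v u}"

definition nbrs :: "('a \<times> 'a) set \<Rightarrow> 'a set \<Rightarrow> 'a set" where
  "nbrs E S = {c. \<exists>v\<in>S. (v, c) \<in> E}"

definition deg_in :: "('a \<times> 'a) set \<Rightarrow> 'a set \<Rightarrow> 'a \<Rightarrow> nat" where
  "deg_in E S c = card {v\<in>S. (v, c) \<in> E}"

definition odd_nbrs :: "('a \<times> 'a) set \<Rightarrow> 'a set \<Rightarrow> 'a set" where
  "odd_nbrs E S = {c \<in> nbrs E S. odd (deg_in E S c)}"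

definition trapping_set :: "'a set \<Rightarrow> ('a \<times> 'a) set \<Rightarrow> 'a set \<Rightarrow> nat \<Rightarrow> nat \<Rightarrow> bool" where
  "trapping_set L E S a b \<longleftrightarrow> S \<subseteq> L \<and> card S = a \<and> card (odd_nbrs E S) = b"

end

theory Submission
  imports Defs
begin

text \<open>Every check node c of v outside the odd-degree checks of S has even degree in G(S),
  so besides v it has a second neighbour in S. Girth > 4 means two variable nodes share at most
  one check node, so distinct such checks get distinct second neighbours. Hence at least
  d(v) - b checks of v inject into S - {v}, and a - 1 \<ge> d(v) - b.\<close>

lemma deg_variable_node:
  assumes "tanner_graph L R E" and "v \<in> L"
  shows "deg E v = card (nbrs E {v})"
proof -
  have "{u. adj E v u} = nbrs E {v}"
    using assms unfolding tanner_graph_def adj_def nbrs_def by auto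
  then show ?thesis
    unfolding deg_def by simp
qed

lemma finite_odd_nbrs:
  assumes "tanner_graph L R E"
  shows "finite (odd_nbrs E S)"
proof (rule finite_subset)
  show "odd_nbrs E S \<subseteq> R"
    using assms unfolding tanner_graph_def odd_nbrs_def nbrs_def by auto
  show "finite R"
    using assms unfolding tanner_graph_def by simp
qed

lemma girth_gt_4_common_check_unique:
  assumes "tanner_graph L R E" and "girth_gt E 4"
    and "u \<in> L" and "v \<in> L" and "u \<noteq> v"
    and "(u, c) \<in> E" and "(u, c') \<in> E" and "(v, c) \<in> E" and "(v, c') \<in> E"
  shows "c = c'"
proof (rule ccontr)
  assume "c \<noteq> c'"
  moreover have "c \<in> R" "c' \<in> R" "L \<inter> R = {}"
    using assms(1,8,9) unfolding tanner_graph_def by auto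
  ultimately have "distinct [v, c, u, c']"
    using assms(3-5) by auto
  moreover have "adj E ([v, c, u, c'] ! i) ([v, c, u, c'] ! ((i + 1) mod 4))" if "i < 4" for i
  proof -
    from \<open>i < 4\<close> have "i = 0 \<or> i = 1 \<or> i = 2 \<or> i = 3" by arith
    then show ?thesis
      using assms(6-9) by (auto simp: adj_def)
  qed
  ultimately have "is_cycle E [v, c, u, c']"
    unfolding is_cycle_def by simp
  then show False
    using assms(2) unfolding girth_gt_def by fastforce
qed

lemma even_check_has_other_nbr:
  assumes "finite S" and "v \<in> S" and "(v, c) \<in> E" and "even (deg_in E S c)"
  shows "\<exists>u\<in>S. u \<noteq> v \<and> (u, c) \<in> E"
proof (rule ccontr)
  assume "\<not> ?thesis"
  with assms(2,3) have "{w\<in>S. (w, c) \<in> E} = {v}" by auto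
  with assms(4) show False
    unfolding deg_in_def by simp
qed

lemma card_even_checks_le:
  assumes "tanner_graph L R E" and "girth_gt E 4" and "S \<subseteq> L" and "v \<in> S"
  shows "card (nbrs E {v} - odd_nbrs E S) \<le> card (S - {v})"
proof (rule card_le_if_inj_on_rel[where r = "\<lambda>c u. (u, c) \<in> E"])
  have "finite L"
    using assms(1) unfolding tanner_graph_def by simp
  then show "finite (S - {v})"
    using assms(3) finite_subset by blast
  then show "\<exists>u. u \<in> S - {v} \<and> (u, c) \<in> E" if "c \<in> nbrs E {v} - odd_nbrs E S" for c
    using that assms(4) even_check_has_other_nbr[of S v c E]
    by (auto simp: nbrs_def odd_nbrs_def)
  show "c = c'"
    if "c \<in> nbrs E {v} - odd_nbrs E S" "c' \<in> nbrs E {v} - odd_nbrs E S"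
      "u \<in> S - {v}" "(u, c) \<in> E" "(u, c') \<in> E" for c c' u
    using that assms girth_gt_4_common_check_unique[of L R E u v c c']
    by (auto simp: nbrs_def)
qed

theorem lemma5:
  fixes L R :: "'a set" and E :: "('a \<times> 'a) set" and S :: "'a set" and a b :: nat and v :: 'a
  assumes "tanner_graph L R E"
    and "girth_gt E 4"
    and "trapping_set L E S a b"
    and "v \<in> S"
    and "deg E v > b"
  shows "a \<ge> deg E v + 1 - b"
proof -
  have S: "S \<subseteq> L" "card S = a" "card (odd_nbrs E S) = b"
    using assms(3) unfolding trapping_set_def by auto
  have "finite S"
    using assms(1) S(1) finite_subset unfolding tanner_graph_def by blast
  have "deg E v = card (nbrs E {v})"
    using deg_variable_node[OF assms(1)] assms(4) S(1) by auto
  also have "\<dots> \<le> card (nbrs E {v} - odd_nbrs E S) + b"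
    using diff_card_le_card_Diff[OF finite_odd_nbrs[OF assms(1)], of "nbrs E {v}" S] S(3)
    by linarith
  also have "\<dots> \<le> card (S - {v}) + b"
    using card_even_checks_le[OF assms(1,2) S(1) assms(4)] by simp
  also have "\<dots> = a - 1 + b"
    using S(2) \<open>finite S\<close> assms(4) by simp
  finally show ?thesis
    using assms(5) by linarith
qed

end
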